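(* Let $V$ be a $W\times W$ GOE random matrix, let $\sigma$ be a fixed (deterministic) complex $W\times W$ matrix, and let $s\in(0,1)$. Then for all vectors $\phi,\psi\in\mathbb C^W$, $$\mathbb E\big|\langle (V-\sigma)^{-1}\phi,\psi\rangle\big|^s\ \ge\ C_{\|\sigma\|,s}\,\|\phi\|^s\|\psi\|^s,$$ where $C_{\|\sigma\|,s}>0$ depends only on $\|\sigma\|$, $s$ and $W$.
   Context: GOE means that $V$ is real symmetric, with $V_{jj}\sim N(0,2)$ and $V_{jk}=V_{kj}\sim N(0,1)$ for $j<k$, all these entries independent. *)

theory Defs
  imports "HOL-Analysis.Analysis" "HOL-Probability.Probability"
begin

definition gauss_var :: "real \<Rightarrow> real measure" where
  "gauss_var v = density lborel (normal_density 0 (sqrt v))"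

definition GOE_entries :: "(('n::{finite,linorder} \<times> 'n) \<Rightarrow> real) measure" where
  "GOE_entries = PiM {(j,k). j \<le> k} (\<lambda>(j,k). if j = k then gauss_var 2 else gauss_var 1)"

definition GOE :: "(real^('n::{finite,linorder})^('n::{finite,linorder})) measure" where
  "GOE = distr GOE_entries borel
     (\<lambda>X. \<chi> j k. if j \<le> k then X (j,k) else X (k,j))"

definition cmat_of_real :: "real^'n^'m \<Rightarrow> complex^'n^'m" where
  "cmat_of_real V = (\<chi> i j. complex_of_real (V $ i $ j))"

definition cinner :: "complex^'n \<Rightarrow> complex^'n \<Rightarrow> complex" where
  "cinner x y = (\<Sum>i\<in>UNIV. x $ i * cnj (y $ i))"

definition opnorm :: "complex^'n^'m \<Rightarrow> real" where
  "opnorm A = onorm (\<lambda>x. A *v x)"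

end

theory Submission
  imports Defs
begin

(* Idea: find a box B of matrices whose GOE probability is bounded below in terms
   of |sigma| and W only, and on which |<(V - sigma)^-1 phi, psi>| >= c |phi| |psi|.
   (1) Alignment: for all phi, psi there is a signed involution matrix R
       (R_{i, pi i} = eps i, pi an involution, eps = +-1 constant on orbits) with
       |<R phi, psi>| >= |phi| |psi| / (3W).  R is real symmetric and R R = 1.
       Averaging over such R controls the symmetrised entries of psi* phi^T,
       whose squares carry at least twice the mass |phi|^2 |psi|^2.
   (2) Perturbation: if V = t R + E' with |E'_jk| <= 1 and t large compared to
       |sigma| and W, then (V - sigma)^-1 = R/t + O(1/t^2), so the matrix element
       is at least half of |<R phi, psi>| / t.
   (3) Probability: the box {V. |V_jk - t R_jk| <= 1} has GOE probability at least
       a product of Gaussian interval probabilities depending only on t and W.  The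
   lower bound holds for every s > 0. *)

lemma cinner_norm_le: "cmod (cinner x y) \<le> norm x * norm y"
proof -
  have "cmod (cinner x y) \<le> (\<Sum>i\<in>UNIV. cmod (x$i) * cmod (y$i))"
    unfolding cinner_def by (rule order_trans[OF norm_sum]) (simp add: norm_mult)
  also have "\<dots> \<le> L2_set (\<lambda>i. cmod (x$i)) UNIV * L2_set (\<lambda>i. cmod (y$i)) UNIV"
    using L2_set_mult_ineq[of "\<lambda>i. cmod (x$i)" "\<lambda>i. cmod (y$i)" UNIV] by simp
  finally show ?thesis by (simp add: norm_vec_def)
qed

lemma cinner_diff_left: "cinner (x - y) z = cinner x z - cinner y z"
  by (simp add: cinner_def sum_subtractf algebra_simps)

lemma cinner_scaleR_left: "cinner (t *\<^sub>R x) z = of_real t * cinner x z"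
  by (simp add: cinner_def sum_distrib_left algebra_simps) (simp add: scaleR_conv_of_real)

lemma matrix_vector_mult_scaleR_right:
  fixes A :: "'a::real_algebra_1^'n^'m"
  shows "A *v (t *\<^sub>R x) = t *\<^sub>R (A *v x)"
  by (simp add: vec_eq_iff matrix_vector_mult_def scaleR_sum_right)

lemma scaleR_matrix_vector_mult:
  fixes A :: "'a::real_algebra_1^'n^'m"
  shows "(t *\<^sub>R A) *v x = t *\<^sub>R (A *v x)"
  by (simp add: vec_eq_iff matrix_vector_mult_def scaleR_sum_right)

lemma norm_matrix_vector_le_entry_bound:
  fixes A :: "complex^'n^'n"
  assumes "\<And>i j. cmod (A$i$j) \<le> 1"
  shows "norm (A *v x) \<le> real CARD('n)^2 * norm x"
proof -
  have row: "cmod ((A *v x)$i) \<le> real CARD('n) * norm x" for i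
  proof -
    have "cmod ((A *v x)$i) \<le> (\<Sum>j\<in>UNIV. cmod (A$i$j * x$j))"
      unfolding matrix_vector_mult_def by (simp add: norm_sum)
    also have "\<dots> \<le> (\<Sum>j\<in>(UNIV::'n set). norm x)"
    proof (rule sum_mono)
      fix j
      show "cmod (A$i$j * x$j) \<le> norm x"
        unfolding norm_mult
        using mult_mono[OF assms Finite_Cartesian_Product.norm_nth_le[of x j]] by simp
    qed
    finally show ?thesis by simp
  qed
  have "norm (A *v x) \<le> (\<Sum>i\<in>UNIV. cmod ((A *v x)$i))"
    unfolding norm_vec_def by (rule L2_set_le_sum) auto
  also have "\<dots> \<le> (\<Sum>i\<in>(UNIV::'n set). real CARD('n) * norm x)"
    by (rule sum_mono) (rule row)
  finally show ?thesis by (simp add: power2_eq_square)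
qed

lemma invertible_if_bounded_below:
  fixes M :: "'a::real_normed_field^'n^'n"
  assumes "0 < a" and below: "\<And>x. a * norm x \<le> norm (M *v x)"
  shows "invertible M"
proof -
  have "inj ((*v) M)"
  proof (rule injI)
    fix x y assume "M *v x = M *v y"
    then have "a * norm (x - y) \<le> 0"
      using below[of "x - y"] by (simp add: matrix_vector_mult_diff_distrib)
    then show "x = y" using \<open>0 < a\<close> by (simp add: mult_le_0_iff)
  qed
  then show ?thesis
    using matrix_left_invertible_injective invertible_left_inverse by blast
qed

lemma matrix_inv_right_apply:
  fixes M :: "'a::field^'n^'n"
  assumes "invertible M"
  shows "M *v (matrix_inv M *v y) = y"
proof -
  have "M ** matrix_inv M = mat 1"
    using assms unfolding invertible_def matrix_inv_def by (rule someI_ex[THEN conjunct1])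
  then show ?thesis by (simp add: matrix_vector_mul_assoc)
qed

subsection \<open>Resolvents of perturbed scaled involutions\<close>

lemma bounded_below_perturbed_involution:
  fixes R E :: "complex^'n^'n"
  assumes RR: "R ** R = mat 1" and R_bound: "\<And>x. norm (R *v x) \<le> \<beta> * norm x"
    and E_bound: "\<And>x. norm (E *v x) \<le> K * norm x"
    and "0 < \<beta>" "0 \<le> K" and t_large: "2 * \<beta> * K \<le> t"
  shows "t / (2 * \<beta>) * norm x \<le> norm ((t *\<^sub>R R + E) *v x)"
proof -
  have "0 \<le> t" using assms by (smt (verit) mult_nonneg_nonneg)
  have "norm x = norm (R *v (R *v x))" by (simp add: matrix_vector_mul_assoc RR)
  also have "\<dots> \<le> \<beta> * norm (R *v x)" by (rule R_bound)
  finally have Rx: "norm x / \<beta> \<le> norm (R *v x)"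
    using \<open>0 < \<beta>\<close> by (simp add: divide_le_eq mult.commute)
  have "K \<le> t / (2 * \<beta>)" using t_large \<open>0 < \<beta>\<close> by (simp add: le_divide_eq mult.commute)
  then have "K * norm x \<le> t / (2 * \<beta>) * norm x" by (rule mult_right_mono) simp
  moreover have "t * (norm x / \<beta>) = 2 * (t / (2 * \<beta>) * norm x)" by simp
  ultimately have "t / (2 * \<beta>) * norm x \<le> t * (norm x / \<beta>) - K * norm x" by linarith
  also have "\<dots> \<le> t * norm (R *v x) - norm (E *v x)"
    using mult_left_mono[OF Rx \<open>0 \<le> t\<close>] E_bound[of x] by linarith
  also have "\<dots> \<le> norm ((t *\<^sub>R R + E) *v x)"
    using norm_diff_ineq[of "t *\<^sub>R (R *v x)" "E *v x"] \<open>0 \<le> t\<close>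
    by (simp add: matrix_vector_mult_add_rdistrib scaleR_matrix_vector_mult)
  finally show ?thesis .
qed

text \<open>In the same situation, \<open>(t R + E)\<inverse> \<phi> = R \<phi> / t + O(\<parallel>\<phi>\<parallel>/t\<^sup>2)\<close>: the difference
  \<open>d\<close> satisfies \<open>(t R + E) d = - E R \<phi> / t\<close>, and \<open>t R + E\<close> is bounded below.\<close>
lemma resolvent_perturbed_involution_approx:
  fixes R E :: "complex^'n^'n" and \<phi> :: "complex^'n"
  assumes RR: "R ** R = mat 1" and R_bound: "\<And>x. norm (R *v x) \<le> \<beta> * norm x"
    and E_bound: "\<And>x. norm (E *v x) \<le> K * norm x"
    and \<beta>_pos: "0 < \<beta>" and K_nonneg: "0 \<le> K" and "0 < t" and t_large: "2 * \<beta> * K \<le> t"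
  shows "invertible (t *\<^sub>R R + E) \<and>
    norm (matrix_inv (t *\<^sub>R R + E) *v \<phi> - (1 / t) *\<^sub>R (R *v \<phi>)) \<le> 2 * \<beta>^2 * K / t^2 * norm \<phi>"
proof -
  let ?M = "t *\<^sub>R R + E"
  have below: "t / (2 * \<beta>) * norm x \<le> norm (?M *v x)" for x
    using bounded_below_perturbed_involution[OF RR R_bound E_bound \<beta>_pos K_nonneg t_large] .
  have inv: "invertible ?M"
    using invertible_if_bounded_below[OF _ below] \<open>0 < t\<close> \<beta>_pos by simp
  define d where "d = matrix_inv ?M *v \<phi> - (1 / t) *\<^sub>R (R *v \<phi>)"
  have RR_phi: "R *v (R *v \<phi>) = \<phi>" by (simp add: matrix_vector_mul_assoc RR)
  have "?M *v ((1 / t) *\<^sub>R (R *v \<phi>)) = (1 / t) *\<^sub>R (t *\<^sub>R \<phi> + E *v (R *v \<phi>))"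
    unfolding matrix_vector_mult_scaleR_right
    by (simp add: matrix_vector_mult_add_rdistrib scaleR_matrix_vector_mult RR_phi)
  also have "\<dots> = \<phi> + (1 / t) *\<^sub>R (E *v (R *v \<phi>))"
    using \<open>0 < t\<close> by (simp add: scaleR_add_right)
  finally have "?M *v d = - ((1 / t) *\<^sub>R (E *v (R *v \<phi>)))"
    unfolding d_def by (simp add: matrix_vector_mult_diff_distrib matrix_inv_right_apply[OF inv])
  then have "t / (2 * \<beta>) * norm d \<le> (1 / t) * norm (E *v (R *v \<phi>))"
    using below[of d] \<open>0 < t\<close> by simp
  also have "\<dots> \<le> (1 / t) * (K * (\<beta> * norm \<phi>))"
    using order_trans[OF E_bound[of "R *v \<phi>"] mult_left_mono[OF R_bound K_nonneg]] \<open>0 < t\<close>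
    by (intro mult_left_mono) auto
  finally have "norm d \<le> 2 * \<beta>^2 * K / t^2 * norm \<phi>"
    using \<open>0 < t\<close> \<beta>_pos by (simp add: field_simps power2_eq_square)
  with inv show ?thesis unfolding d_def by simp
qed

text \<open>Consequently, if \<open>R\<close> is aligned with \<open>\<phi>\<close> and \<open>\<psi>\<close> and \<open>t\<close> is large, the error term is at
  most half the size of the main term \<open>\<langle>R \<phi>, \<psi>\<rangle>/t\<close>.\<close>
lemma resolvent_perturbed_involution:
  fixes R E :: "complex^'n^'n" and \<phi> \<psi> :: "complex^'n"
  assumes RR: "R ** R = mat 1" and R_bound: "\<And>x. norm (R *v x) \<le> \<beta> * norm x"
    and E_bound: "\<And>x. norm (E *v x) \<le> K * norm x"
    and \<beta>_pos: "0 < \<beta>" and K_nonneg: "0 \<le> K" and "0 < c" "0 < t"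
    and aligned: "c * norm \<phi> * norm \<psi> \<le> cmod (cinner (R *v \<phi>) \<psi>)"
    and t_large1: "2 * \<beta> * K \<le> t" and t_large2: "4 * \<beta>^2 * K / c \<le> t"
  shows "invertible (t *\<^sub>R R + E) \<and>
    c / (2 * t) * norm \<phi> * norm \<psi> \<le> cmod (cinner (matrix_inv (t *\<^sub>R R + E) *v \<phi>) \<psi>)"
proof -
  define y where "y = matrix_inv (t *\<^sub>R R + E) *v \<phi>"
  define z where "z = (1 / t) *\<^sub>R (R *v \<phi>)"
  obtain inv: "invertible (t *\<^sub>R R + E)" and approx: "norm (y - z) \<le> 2 * \<beta>^2 * K / t^2 * norm \<phi>"
    using resolvent_perturbed_involution_approx[OF RR R_bound E_bound \<beta>_pos K_nonneg \<open>0 < t\<close> t_large1]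
    unfolding y_def z_def by blast
  have "2 * \<beta>^2 * K / t^2 \<le> c / (2 * t)"
  proof -
    have "4 * \<beta>^2 * K \<le> c * t" using t_large2 \<open>0 < c\<close> by (simp add: divide_le_eq mult.commute)
    then show ?thesis using \<open>0 < t\<close> by (simp add: field_simps power2_eq_square)
  qed
  with approx have "norm (y - z) \<le> c / (2 * t) * norm \<phi>"
    by (meson mult_right_mono norm_ge_zero order_trans)
  then have err: "cmod (cinner (y - z) \<psi>) \<le> c / (2 * t) * norm \<phi> * norm \<psi>"
    using cinner_norm_le[of "y - z" \<psi>] mult_right_mono[of _ _ "norm \<psi>"] by fastforce
  have main: "c / t * norm \<phi> * norm \<psi> \<le> cmod (cinner z \<psi>)"
    using aligned \<open>0 < t\<close> unfolding z_def cinner_scaleR_left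
    by (simp add: norm_divide divide_right_mono)
  have "cmod (cinner z \<psi>) - cmod (cinner (y - z) \<psi>) \<le> cmod (cinner y \<psi>)"
    using norm_diff_ineq[of "cinner z \<psi>" "cinner (y - z) \<psi>"] by (simp add: cinner_diff_left)
  with main err have "c / t * norm \<phi> * norm \<psi> - c / (2 * t) * norm \<phi> * norm \<psi> \<le> cmod (cinner y \<psi>)"
    by linarith
  then show ?thesis using inv unfolding y_def by (simp add: field_simps)
qed

subsection \<open>Signed involution matrices\<close>

definition signed_involution :: "('n \<Rightarrow> 'n) \<Rightarrow> ('n \<Rightarrow> real) \<Rightarrow> bool" where
  "signed_involution \<pi> \<epsilon> \<longleftrightarrow>
     (\<forall>i. \<pi> (\<pi> i) = i) \<and> (\<forall>i. \<epsilon> i = 1 \<or> \<epsilon> i = -1) \<and> (\<forall>i. \<epsilon> (\<pi> i) = \<epsilon> i)"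

definition signed_perm_matrix :: "('n::finite \<Rightarrow> 'n) \<Rightarrow> ('n \<Rightarrow> real) \<Rightarrow> real^'n^'n" where
  "signed_perm_matrix \<pi> \<epsilon> = (\<chi> i j. if j = \<pi> i then \<epsilon> i else 0)"

lemma signed_perm_matrix_square:
  assumes "signed_involution \<pi> \<epsilon>"
  shows "signed_perm_matrix \<pi> \<epsilon> ** signed_perm_matrix \<pi> \<epsilon> = mat 1"
proof -
  have inv: "\<pi> (\<pi> i) = i" and sign: "\<epsilon> (\<pi> i) = \<epsilon> i" and pm: "\<epsilon> i = 1 \<or> \<epsilon> i = -1" for i
    using assms unfolding signed_involution_def by auto
  have sq: "\<epsilon> i * \<epsilon> i = 1" for i using pm[of i] by auto
  have "(\<Sum>k\<in>UNIV. (if k = \<pi> i then \<epsilon> i else 0) * (if j = \<pi> k then \<epsilon> k else 0))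
        = (if j = i then 1 else 0)" for i j
  proof -
    have "(\<Sum>k\<in>UNIV. (if k = \<pi> i then \<epsilon> i else 0) * (if j = \<pi> k then \<epsilon> k else 0))
        = (\<Sum>k\<in>UNIV. if k = \<pi> i then \<epsilon> i * (if j = \<pi> (\<pi> i) then \<epsilon> (\<pi> i) else 0) else 0)"
      by (rule sum.cong) auto
    then show ?thesis by (simp add: inv sign sq)
  qed
  then show ?thesis
    by (simp add: signed_perm_matrix_def matrix_matrix_mult_def mat_def vec_eq_iff)
qed

lemma signed_perm_matrix_symmetric:
  assumes "signed_involution \<pi> \<epsilon>"
  shows "signed_perm_matrix \<pi> \<epsilon> $ i $ j = signed_perm_matrix \<pi> \<epsilon> $ j $ i"
proof -
  have inv: "\<And>i. \<pi> (\<pi> i) = i" and sign: "\<And>i. \<epsilon> (\<pi> i) = \<epsilon> i"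
    using assms unfolding signed_involution_def by auto
  have "j = \<pi> i \<longleftrightarrow> i = \<pi> j" using inv by auto
  then show ?thesis using sign by (auto simp: signed_perm_matrix_def)
qed

lemma signed_perm_matrix_entry_bound:
  assumes "signed_involution \<pi> \<epsilon>"
  shows "\<bar>signed_perm_matrix \<pi> \<epsilon> $ i $ j\<bar> \<le> 1"
proof -
  have "\<epsilon> i = 1 \<or> \<epsilon> i = -1" using assms unfolding signed_involution_def by auto
  then show ?thesis by (auto simp: signed_perm_matrix_def)
qed

lemma cmat_of_real_mult: "cmat_of_real (A ** B) = cmat_of_real A ** cmat_of_real B"
  by (simp add: cmat_of_real_def matrix_matrix_mult_def vec_eq_iff)

lemma cmat_of_real_one: "cmat_of_real (mat 1) = mat 1"
  by (simp add: cmat_of_real_def mat_def vec_eq_iff)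

lemma cmat_of_real_diff: "cmat_of_real (A - B) = cmat_of_real A - cmat_of_real B"
  by (simp add: cmat_of_real_def vec_eq_iff)

lemma cmat_of_real_scaleR: "cmat_of_real (t *\<^sub>R A) = t *\<^sub>R cmat_of_real A"
  by (simp add: cmat_of_real_def vec_eq_iff) (simp add: scaleR_conv_of_real)

lemma cinner_signed_perm_matrix:
  "cinner (cmat_of_real (signed_perm_matrix \<pi> \<epsilon>) *v \<phi>) \<psi>
     = (\<Sum>i\<in>UNIV. of_real (\<epsilon> i) * (cnj (\<psi>$i) * \<phi>$(\<pi> i)))"
proof -
  have row: "(cmat_of_real (signed_perm_matrix \<pi> \<epsilon>) *v \<phi>) $ i = of_real (\<epsilon> i) * \<phi> $ (\<pi> i)" for i
  proof -
    have "(\<Sum>j\<in>UNIV. complex_of_real (if j = \<pi> i then \<epsilon> i else 0) * \<phi> $ j)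
       = (\<Sum>j\<in>UNIV. if j = \<pi> i then of_real (\<epsilon> i) * \<phi> $ j else 0)"
      by (rule sum.cong) auto
    then show ?thesis
      by (simp add: cmat_of_real_def signed_perm_matrix_def matrix_vector_mult_def)
  qed
  show ?thesis unfolding cinner_def row by (simp add: algebra_simps)
qed

text \<open>Combinatorial core: if all signed-involution sums of a square array \<open>N\<close> are at most
  \<open>m\<close> in modulus, so are the symmetrised entries \<open>N p q + N q p\<close>, up to a factor 2.  They are
  signed combinations of the sums for the identity, a single sign flip and a transposition.\<close>
lemma symmetrised_entry_bound:
  fixes N :: "'n::finite \<Rightarrow> 'n \<Rightarrow> complex"
  assumes sums_small: "\<And>\<pi> \<epsilon>. signed_involution \<pi> \<epsilon> \<Longrightarrow>
      cmod (\<Sum>i\<in>UNIV. of_real (\<epsilon> i) * N i (\<pi> i)) \<le> m"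
  shows "cmod (N p q + N q p) \<le> 2 * m"
proof -
  define a where "a \<pi> \<epsilon> = (\<Sum>i\<in>UNIV. of_real (\<epsilon> i) * N i (\<pi> i))" for \<pi> \<epsilon>
  define flip where "flip p i = (if i = p then -1 else 1::real)" for p i :: 'n
  define T where "T = (\<Sum>i\<in>UNIV. N i i)"
  have id_ok: "signed_involution id (\<lambda>_. 1)" by (simp add: signed_involution_def)
  have a_id: "cmod T \<le> m" using sums_small[OF id_ok] by (simp add: T_def)
  have a_flip: "cmod (T - 2 * N p p) \<le> m" for p
  proof -
    have flip_ok: "signed_involution id (flip p)" by (simp add: signed_involution_def flip_def)
    have "a id (flip p) = (\<Sum>i\<in>UNIV. N i i - (if i = p then 2 * N p p else 0))"
      unfolding a_def by (rule sum.cong) (auto simp: flip_def)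
    also have "\<dots> = T - 2 * N p p" by (simp add: sum_subtractf T_def)
    finally show ?thesis using sums_small[OF flip_ok] unfolding a_def by simp
  qed
  show ?thesis
  proof (cases "p = q")
    case True
    have "cmod (N p q + N q p) = cmod (T - (T - 2 * N p p))" using True by simp
    also have "\<dots> \<le> cmod T + cmod (T - 2 * N p p)" by (rule norm_triangle_ineq4)
    finally show ?thesis using a_id a_flip[of p] by linarith
  next
    case False
    define s where "s i = (if i = p then q else if i = q then p else i)" for i
    have swap_ok: "signed_involution s (\<lambda>_. 1)" unfolding signed_involution_def s_def by auto
    have "a s (\<lambda>_. 1) = (\<Sum>i\<in>UNIV. N i i + (if i = p then N p q - N p p else 0)
        + (if i = q then N q p - N q q else 0))"
      unfolding a_def by (rule sum.cong) (use False in \<open>auto simp: s_def\<close>)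
    also have "\<dots> = T + (N p q - N p p) + (N q p - N q q)" by (simp add: sum.distrib T_def)
    finally have a_swap: "cmod (T + (N p q - N p p) + (N q p - N q q)) \<le> m"
      using sums_small[OF swap_ok] unfolding a_def by simp
    have triangle: "cmod (X - Y / 2 - Z / 2) \<le> cmod X + cmod Y / 2 + cmod Z / 2" for X Y Z :: complex
    proof -
      have "cmod (X - Y / 2 - Z / 2) \<le> cmod (X - Y / 2) + cmod (Z / 2)" by (rule norm_triangle_ineq4)
      also have "\<dots> \<le> cmod X + cmod (Y / 2) + cmod (Z / 2)" using norm_triangle_ineq4[of X "Y / 2"] by simp
      finally show ?thesis by (simp add: norm_divide)
    qed
    have decomp: "N p q + N q p
        = (T + (N p q - N p p) + (N q p - N q q)) - (T - 2 * N p p) / 2 - (T - 2 * N q q) / 2"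
      by (simp add: field_simps)
    have "cmod (N p q + N q p) \<le> cmod (T + (N p q - N p p) + (N q p - N q q))
        + cmod (T - 2 * N p p) / 2 + cmod (T - 2 * N q q) / 2"
      unfolding decomp by (rule triangle)
    then show ?thesis using a_swap a_flip[of p] a_flip[of q] by linarith
  qed
qed

text \<open>For the rank-one array \<open>N p q = \<psi>\<^sub>p\<^sup>* \<phi>\<^sub>q\<close> the symmetrised entries carry at least twice
  the squared mass \<open>\<parallel>\<phi>\<parallel>\<^sup>2 \<parallel>\<psi>\<parallel>\<^sup>2\<close>: the cross term equals \<open>|\<Sum>\<^sub>q \<psi>\<^sub>q \<phi>\<^sub>q|\<^sup>2 \<ge> 0\<close>.\<close>
lemma symmetrised_square_sum:
  fixes \<phi> \<psi> :: "complex^'n"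
  shows "2 * (norm \<phi> * norm \<psi>)^2
    \<le> (\<Sum>p\<in>UNIV. \<Sum>q\<in>UNIV. cmod (cnj (\<psi>$p) * \<phi>$q + cnj (\<psi>$q) * \<phi>$p)^2)"
proof -
  define N where "N p q = cnj (\<psi>$p) * \<phi>$q" for p q
  define w where "w = (\<Sum>q\<in>UNIV. \<psi>$q * \<phi>$q)"
  have "cnj w * w = (\<Sum>p\<in>UNIV. cnj (\<psi>$p) * cnj (\<phi>$p)) * (\<Sum>q\<in>UNIV. \<psi>$q * \<phi>$q)"
    by (simp add: w_def)
  also have "\<dots> = (\<Sum>p\<in>UNIV. \<Sum>q\<in>UNIV. N p q * cnj (N q p))"
    unfolding sum_product N_def by (intro sum.cong refl) (simp add: algebra_simps)
  finally have cross: "(\<Sum>p\<in>UNIV. \<Sum>q\<in>UNIV. N p q * cnj (N q p)) = cnj w * w" by simp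
  have mass: "(\<Sum>p\<in>UNIV. \<Sum>q\<in>UNIV. cmod (N p q)^2) = (norm \<phi> * norm \<psi>)^2"
  proof -
    have "(norm \<phi> * norm \<psi>)^2 = (\<Sum>p\<in>UNIV. cmod (\<psi>$p)^2) * (\<Sum>q\<in>UNIV. cmod (\<phi>$q)^2)"
      by (simp add: norm_vec_def L2_set_def sum_nonneg power_mult_distrib)
    then show ?thesis
      unfolding sum_product N_def by (simp add: norm_mult power_mult_distrib)
  qed
  have expand: "cmod (a + b)^2 = cmod a^2 + cmod b^2 + 2 * Re (a * cnj b)" for a b
    by (simp add: cmod_power2 power2_sum algebra_simps)
  have "(\<Sum>p\<in>UNIV. \<Sum>q\<in>UNIV. cmod (N p q + N q p)^2)
      = (\<Sum>p\<in>UNIV. \<Sum>q\<in>UNIV. cmod (N p q)^2) + (\<Sum>p\<in>UNIV. \<Sum>q\<in>UNIV. cmod (N q p)^2)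
        + 2 * (\<Sum>p\<in>UNIV. \<Sum>q\<in>UNIV. Re (N p q * cnj (N q p)))"
    by (simp only: expand sum.distrib sum_distrib_left)
  also have "\<dots> = (\<Sum>p\<in>UNIV. \<Sum>q\<in>UNIV. cmod (N p q)^2) + (\<Sum>p\<in>UNIV. \<Sum>q\<in>UNIV. cmod (N q p)^2)
        + 2 * Re (\<Sum>p\<in>UNIV. \<Sum>q\<in>UNIV. N p q * cnj (N q p))"
    by simp
  also have "\<dots> = 2 * (norm \<phi> * norm \<psi>)^2 + 2 * Re (cnj w * w)"
    using sum.swap[of "\<lambda>p q. cmod (N q p)^2" UNIV UNIV] mass unfolding cross by simp
  finally show ?thesis unfolding N_def by (simp add: algebra_simps)
qed

lemma exists_aligned_signed_involution:
  fixes \<phi> \<psi> :: "complex^'n"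
  shows "\<exists>\<pi> \<epsilon>. signed_involution \<pi> \<epsilon> \<and>
     norm \<phi> * norm \<psi> / (3 * real CARD('n))
       \<le> cmod (cinner (cmat_of_real (signed_perm_matrix \<pi> \<epsilon>) *v \<phi>) \<psi>)"
proof (rule ccontr)
  define W where "W = real CARD('n)"
  define m where "m = norm \<phi> * norm \<psi> / (3 * W)"
  define N where "N p q = cnj (\<psi>$p) * \<phi>$q" for p q
  assume "\<not> ?thesis"
  then have small: "cmod (\<Sum>i\<in>UNIV. of_real (\<epsilon> i) * N i (\<pi> i)) < m"
    if "signed_involution \<pi> \<epsilon>" for \<pi> \<epsilon>
    using that unfolding cinner_signed_perm_matrix m_def W_def N_def by force
  have "signed_involution id (\<lambda>_. 1)" by (simp add: signed_involution_def)
  from small[OF this] have "0 < m" by (meson le_less_trans norm_ge_zero)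
  have "cmod (N p q + N q p) \<le> 2 * m" for p q
    by (rule symmetrised_entry_bound) (use small in \<open>simp add: less_imp_le\<close>)
  then have "cmod (N p q + N q p)^2 \<le> (2 * m)^2" for p q
    using power_mono norm_ge_zero by blast
  then have "(\<Sum>p\<in>UNIV. \<Sum>q\<in>UNIV. cmod (N p q + N q p)^2) \<le> (\<Sum>p\<in>(UNIV::'n set). \<Sum>q\<in>(UNIV::'n set). (2 * m)^2)"
    by (intro sum_mono)
  also have "\<dots> = W * W * (2 * m)^2" by (simp add: W_def)
  finally have "(\<Sum>p\<in>UNIV. \<Sum>q\<in>UNIV. cmod (N p q + N q p)^2) \<le> W * W * (2 * m)^2" .
  moreover have "W * W * (2 * m)^2 = 4 / 9 * (norm \<phi> * norm \<psi>)^2"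
    using finite_UNIV_card_ge_0[where 'a='n]
    unfolding m_def W_def by (simp add: power2_eq_square field_simps)
  ultimately have "(norm \<phi> * norm \<psi>)^2 \<le> 0"
    using symmetrised_square_sum[of \<phi> \<psi>] unfolding N_def by linarith
  then show False using \<open>0 < m\<close> unfolding m_def by auto
qed

subsection \<open>GOE probability of boxes\<close>

definition GOE_index :: "('n::{finite,linorder} \<times> 'n) set" where
  "GOE_index = {(j,k). j \<le> k}"

definition GOE_marginal :: "('n::{finite,linorder} \<times> 'n) \<Rightarrow> real measure" where
  "GOE_marginal = (\<lambda>(j,k). if j = k then gauss_var 2 else gauss_var 1)"

definition symmetrize ::
    "('n::{finite,linorder} \<times> 'n::{finite,linorder} \<Rightarrow> real) \<Rightarrow> real^'n::{finite,linorder}^'n::{finite,linorder}"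
  where
  "symmetrize X = (\<chi> j k. if j \<le> k then X (j,k) else X (k,j))"

lemma GOE_as_distr: "GOE = distr (PiM GOE_index GOE_marginal) borel symmetrize"
  unfolding GOE_def GOE_entries_def GOE_index_def GOE_marginal_def symmetrize_def ..

lemma sets_GOE_marginal: "sets (GOE_marginal i) = sets borel"
  by (cases i) (simp add: GOE_marginal_def gauss_var_def)

lemma space_GOE_marginal: "space (GOE_marginal i) = UNIV"
  using sets_eq_imp_space_eq[OF sets_GOE_marginal[of i]] by simp

lemma prob_space_GOE_marginal: "prob_space (GOE_marginal i)"
  by (cases i) (simp add: GOE_marginal_def gauss_var_def prob_space_normal_density)

lemma measurable_symmetrize:
  "symmetrize \<in> borel_measurable (PiM GOE_index (GOE_marginal :: ('n::{finite,linorder} \<times> 'n) \<Rightarrow> _))"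
proof (rule borel_measurable_euclidean_space[THEN iffD2], rule ballI)
  fix b :: "real^'n::{finite,linorder}^'n::{finite,linorder}" assume "b \<in> Basis"
  then obtain i j where b: "b = axis i (axis j 1)" by (auto simp: Basis_vec_def)
  have component: "(\<lambda>X. X e) \<in> borel_measurable (PiM GOE_index GOE_marginal)"
    if "e \<in> GOE_index" for e :: "'n \<times> 'n"
    using measurable_component_singleton[OF that, of GOE_marginal]
      measurable_cong_sets[OF refl sets_GOE_marginal] by blast
  have "(\<lambda>X. symmetrize X \<bullet> b) = (\<lambda>X. if i \<le> j then X (i,j) else X (j,i))"
    by (simp add: b inner_axis symmetrize_def)
  then show "(\<lambda>X. symmetrize X \<bullet> b) \<in> borel_measurable (PiM GOE_index GOE_marginal)"
    using component[of "(i,j)"] component[of "(j,i)"] by (cases "i \<le> j") (auto simp: GOE_index_def)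
qed

definition entry_box :: "real^'n^'n \<Rightarrow> (real^'n^'n) set" where
  "entry_box c = {V. \<forall>j k. \<bar>V$j$k - c$j$k\<bar> \<le> 1}"

lemma entry_box_sets: "entry_box c \<in> sets borel"
proof -
  have [measurable]: "(\<lambda>x::real^'n^'n. x$j$k) \<in> borel_measurable borel" for j k
    by (intro borel_measurable_continuous_onI continuous_intros)
  show ?thesis unfolding entry_box_def by measurable
qed

text \<open>A lower bound for the centred Gaussian densities of variance between 1 and 2
  on the interval \<open>[-(t+1), t+1]\<close>.\<close>
definition gauss_floor :: "real \<Rightarrow> real" where
  "gauss_floor t = exp (- ((t + 1)^2) / 2) / sqrt (4 * pi)"

lemma gauss_floor_pos: "0 < gauss_floor t"
  by (simp add: gauss_floor_def)

lemma normal_density_ge_gauss_floor: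
  assumes "\<bar>x\<bar> \<le> t + 1" and "1 \<le> v" "v \<le> 2"
  shows "gauss_floor t \<le> normal_density 0 (sqrt v) x"
proof -
  have prefactor: "1 / sqrt (4 * pi) \<le> 1 / sqrt (2 * pi * v)"
    using assms(2,3) by (intro divide_left_mono real_sqrt_le_mono) auto
  have "x^2 \<le> (t + 1)^2" using power_mono[OF assms(1), of 2] by simp
  moreover have "x^2 / (2 * v) \<le> x^2 / 2" using assms(2) by (intro divide_left_mono) auto
  ultimately have "exp (- ((t + 1)^2) / 2) \<le> exp (- ((x - 0)^2) / (2 * v))" by simp
  with prefactor have "1 / sqrt (4 * pi) * exp (- ((t + 1)^2) / 2)
      \<le> 1 / sqrt (2 * pi * v) * exp (- ((x - 0)^2) / (2 * v))"
    by (rule mult_mono) (use assms(2) in simp_all)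
  then show ?thesis using assms(2) unfolding normal_density_def gauss_floor_def by simp
qed

lemma gauss_var_interval_ge:
  assumes "\<bar>x0\<bar> \<le> t" and "1 \<le> v" "v \<le> 2"
  shows "ennreal (2 * gauss_floor t) \<le> emeasure (gauss_var v) {x0 - 1 .. x0 + 1}"
proof -
  have "ennreal (gauss_floor t) * 2 = (\<integral>\<^sup>+ x. ennreal (gauss_floor t) * indicator {x0 - 1 .. x0 + 1} x \<partial>lborel)"
    by (subst nn_integral_cmult_indicator) auto
  also have "\<dots> \<le> (\<integral>\<^sup>+ x. ennreal (normal_density 0 (sqrt v) x) * indicator {x0 - 1 .. x0 + 1} x \<partial>lborel)"
    using assms normal_density_ge_gauss_floor[of _ t v]
    by (intro nn_integral_mono) (auto simp: indicator_def ennreal_leI)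
  also have "\<dots> = emeasure (gauss_var v) {x0 - 1 .. x0 + 1}"
    unfolding gauss_var_def by (rule emeasure_density[symmetric]) auto
  finally show ?thesis using gauss_floor_pos[of t] by (simp add: ennreal_mult' mult.commute)
qed

lemma product_box_subset_entry_box:
  fixes c :: "real^'n::{finite,linorder}^'n::{finite,linorder}"
  assumes sym: "\<And>j k. c$j$k = c$k$j"
  defines "A \<equiv> \<lambda>e::'n \<times> 'n. {c$(fst e)$(snd e) - 1 .. c$(fst e)$(snd e) + 1}"
  shows "PiE GOE_index A \<subseteq> symmetrize -` entry_box c \<inter> space (PiM GOE_index GOE_marginal)"
proof
  fix X assume X: "X \<in> PiE GOE_index A"
  have entry: "X (j,k) \<in> A (j,k)" if "j \<le> k" for j k
    using X that by (auto simp: PiE_def Pi_def GOE_index_def)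
  have "symmetrize X \<in> entry_box c"
    unfolding entry_box_def
  proof (intro CollectI allI)
    fix j k :: 'n
    show "\<bar>symmetrize X $ j $ k - c $ j $ k\<bar> \<le> 1"
      using entry[of j k] entry[of k j] sym[of j k] linear[of j k]
      by (cases "j \<le> k") (auto simp: symmetrize_def A_def abs_le_iff)
  qed
  moreover have "X \<in> space (PiM GOE_index GOE_marginal)"
    using X by (simp add: space_PiM space_GOE_marginal PiE_def Pi_def)
  ultimately show "X \<in> symmetrize -` entry_box c \<inter> space (PiM GOE_index GOE_marginal)" by simp
qed

lemma GOE_entry_box_ge:
  fixes c :: "real^'n::{finite,linorder}^'n::{finite,linorder}"
  assumes sym: "\<And>j k. c$j$k = c$k$j" and bound: "\<And>j k. \<bar>c$j$k\<bar> \<le> t"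
  shows "ennreal ((2 * gauss_floor t) ^ card (GOE_index :: ('n \<times> 'n) set)) \<le> emeasure GOE (entry_box c)"
proof -
  define A where "A e = {c$(fst e)$(snd e) - 1 .. c$(fst e)$(snd e) + 1}" for e :: "'n \<times> 'n"
  have "product_sigma_finite GOE_marginal"
    unfolding product_sigma_finite_def
    using prob_space_GOE_marginal prob_space_imp_sigma_finite by blast
  then have "emeasure (PiM GOE_index GOE_marginal) (PiE GOE_index A)
      = (\<Prod>e\<in>GOE_index. emeasure (GOE_marginal e) (A e))"
    by (rule product_sigma_finite.emeasure_PiM) (simp_all add: sets_GOE_marginal A_def)
  also have "\<dots> \<ge> (\<Prod>e\<in>(GOE_index :: ('n \<times> 'n) set). ennreal (2 * gauss_floor t))"
  proof (rule prod_mono_ennreal)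
    fix e :: "'n \<times> 'n"
    obtain j k where e: "e = (j,k)" by (cases e)
    show "ennreal (2 * gauss_floor t) \<le> emeasure (GOE_marginal e) (A e)"
      using gauss_var_interval_ge[OF bound[of j k], of "if j = k then 2 else 1"]
      by (cases "j = k") (simp_all add: e A_def GOE_marginal_def)
  qed
  finally have "ennreal ((2 * gauss_floor t) ^ card (GOE_index :: ('n \<times> 'n) set))
      \<le> emeasure (PiM GOE_index GOE_marginal) (PiE GOE_index A)"
    using gauss_floor_pos[of t] by (simp add: ennreal_power)
  also have "\<dots> \<le> emeasure (PiM GOE_index GOE_marginal) (symmetrize -` entry_box c \<inter> space (PiM GOE_index GOE_marginal))"
    using product_box_subset_entry_box[OF sym] measurable_sets[OF measurable_symmetrize entry_box_sets]
    unfolding A_def by (intro emeasure_mono) auto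
  also have "\<dots> = emeasure GOE (entry_box c)"
    unfolding GOE_as_distr by (rule emeasure_distr[OF measurable_symmetrize entry_box_sets, symmetric])
  finally show ?thesis .
qed

text \<open>The scaling \<open>t\<close> of the box centre: large enough for both conditions of
  \<open>resolvent_perturbed_involution\<close>, with \<open>\<beta> = W\<^sup>2\<close>, \<open>K = W\<^sup>2 + |r|\<close> and the
  alignment constant \<open>c = 1/(3W)\<close>.\<close>
definition resolvent_scale :: "nat \<Rightarrow> real \<Rightarrow> real" where
  "resolvent_scale W r = 2 * real W^2 * (real W^2 + \<bar>r\<bar>)
     + 4 * (real W^2)^2 * (real W^2 + \<bar>r\<bar>) / (1 / (3 * real W)) + 1"

lemma resolvent_scale_large:
  "2 * real W^2 * (real W^2 + \<bar>r\<bar>) \<le> resolvent_scale W r"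
  "4 * (real W^2)^2 * (real W^2 + \<bar>r\<bar>) / (1 / (3 * real W)) \<le> resolvent_scale W r"
  "0 < resolvent_scale W r"
proof -
  have "0 \<le> 2 * real W^2 * (real W^2 + \<bar>r\<bar>)"
    and "0 \<le> 4 * (real W^2)^2 * (real W^2 + \<bar>r\<bar>) / (1 / (3 * real W))" by simp_all
  then show "2 * real W^2 * (real W^2 + \<bar>r\<bar>) \<le> resolvent_scale W r"
    "4 * (real W^2)^2 * (real W^2 + \<bar>r\<bar>) / (1 / (3 * real W)) \<le> resolvent_scale W r"
    "0 < resolvent_scale W r"
    unfolding resolvent_scale_def by linarith+
qed

lemma entry_box_deviation_bound:
  fixes V c :: "real^'n^'n"
  assumes "V \<in> entry_box c"
  shows "norm (cmat_of_real (V - c) *v x) \<le> real CARD('n)^2 * norm x"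
proof (rule norm_matrix_vector_le_entry_bound)
  show "cmod (cmat_of_real (V - c) $ i $ j) \<le> 1" for i j
    unfolding cmat_of_real_def vec_lambda_beta norm_of_real
    using assms by (simp add: entry_box_def)
qed

lemma resolvent_lower_bound_on_box:
  fixes \<sigma> :: "complex^'n^'n" and \<phi> \<psi> :: "complex^'n"
  assumes signed: "signed_involution \<pi> \<epsilon>"
    and aligned: "norm \<phi> * norm \<psi> / (3 * real CARD('n))
      \<le> cmod (cinner (cmat_of_real (signed_perm_matrix \<pi> \<epsilon>) *v \<phi>) \<psi>)"
    and \<sigma>_bound: "\<And>x. norm (\<sigma> *v x) \<le> r * norm x" and "0 \<le> r"
    and V: "V \<in> entry_box (resolvent_scale CARD('n) r *\<^sub>R signed_perm_matrix \<pi> \<epsilon>)"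
  shows "norm \<phi> * norm \<psi> / (6 * real CARD('n) * resolvent_scale CARD('n) r)
    \<le> cmod (cinner (matrix_inv (cmat_of_real V - \<sigma>) *v \<phi>) \<psi>)"
proof -
  define W where "W = real CARD('n)"
  define t where "t = resolvent_scale CARD('n) r"
  define R where "R = signed_perm_matrix \<pi> \<epsilon>"
  define E where "E = cmat_of_real (V - t *\<^sub>R R) - \<sigma>"
  have "1 \<le> W" unfolding W_def using finite_UNIV_card_ge_0[where 'a='n] by simp
  then have "1 \<le> W^2" by simp
  have RR: "cmat_of_real R ** cmat_of_real R = mat 1"
    unfolding R_def cmat_of_real_mult[symmetric] signed_perm_matrix_square[OF signed] cmat_of_real_one ..
  have R_bound: "norm (cmat_of_real R *v x) \<le> W^2 * norm x" for x
    unfolding W_def using signed_perm_matrix_entry_bound[OF signed]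
    by (intro norm_matrix_vector_le_entry_bound) (simp add: cmat_of_real_def R_def)
  have E_bound: "norm (E *v x) \<le> (W^2 + r) * norm x" for x
  proof -
    have "norm (E *v x) \<le> norm (cmat_of_real (V - t *\<^sub>R R) *v x) + norm (\<sigma> *v x)"
      unfolding E_def matrix_vector_mult_diff_rdistrib by (rule norm_triangle_ineq4)
    also have "\<dots> \<le> W^2 * norm x + r * norm x"
      using entry_box_deviation_bound[OF V[folded t_def R_def]] \<sigma>_bound
      unfolding W_def by (rule add_mono)
    finally show ?thesis by (simp add: algebra_simps)
  qed
  have t_large: "2 * W^2 * (W^2 + r) \<le> t" "4 * (W^2)^2 * (W^2 + r) / (1 / (3 * W)) \<le> t"
    using resolvent_scale_large(1,2)[of "CARD('n)" r] \<open>0 \<le> r\<close> unfolding t_def W_def by simp_all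
  have "0 < t" unfolding t_def by (rule resolvent_scale_large(3))
  have aligned': "1 / (3 * W) * norm \<phi> * norm \<psi> \<le> cmod (cinner (cmat_of_real R *v \<phi>) \<psi>)"
    using aligned unfolding W_def R_def by simp
  have "1 / (3 * W) / (2 * t) * norm \<phi> * norm \<psi>
      \<le> cmod (cinner (matrix_inv (t *\<^sub>R cmat_of_real R + E) *v \<phi>) \<psi>)"
    using resolvent_perturbed_involution[OF RR R_bound E_bound _ _ _ \<open>0 < t\<close> aligned' t_large]
      \<open>1 \<le> W\<^sup>2\<close> \<open>1 \<le> W\<close> \<open>0 \<le> r\<close> by simp
  moreover have "cmat_of_real V - \<sigma> = t *\<^sub>R cmat_of_real R + E"
    unfolding E_def by (simp add: cmat_of_real_diff cmat_of_real_scaleR)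
  moreover have "1 / (3 * W) / (2 * t) * norm \<phi> * norm \<psi> = norm \<phi> * norm \<psi> / (6 * W * t)"
    by simp
  ultimately show ?thesis unfolding W_def[symmetric] t_def[symmetric] by simp
qed

lemma nn_integral_ge_on_set:
  assumes "A \<in> sets M" and "\<And>x. x \<in> A \<Longrightarrow> a \<le> f x"
  shows "a * emeasure M A \<le> (\<integral>\<^sup>+ x. f x \<partial>M)"
proof -
  have "a * emeasure M A = (\<integral>\<^sup>+ x. a * indicator A x \<partial>M)"
    by (rule nn_integral_cmult_indicator[OF assms(1), symmetric])
  also have "\<dots> \<le> (\<integral>\<^sup>+ x. f x \<partial>M)"
    using assms(2) by (intro nn_integral_mono) (simp add: indicator_def)
  finally show ?thesis .
qed

definition moment_constant :: "nat \<Rightarrow> nat \<Rightarrow> real \<Rightarrow> real \<Rightarrow> real" where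
  "moment_constant W N s r = (2 * gauss_floor (resolvent_scale W r)) ^ N
     * (1 / (6 * real W * resolvent_scale W r)) powr s"

lemma moment_constant_pos:
  assumes "0 < W" shows "0 < moment_constant W N s r"
proof -
  have "0 < 1 / (6 * real W * resolvent_scale W r)" using assms resolvent_scale_large(3)[of W r] by simp
  then have "0 < (1 / (6 * real W * resolvent_scale W r)) powr s"
    by (subst powr_gt_zero) linarith
  moreover have "0 < (2 * gauss_floor (resolvent_scale W r)) ^ N" using gauss_floor_pos by simp
  ultimately show ?thesis unfolding moment_constant_def by simp
qed

text \<open>The lower bound for fixed \<open>\<sigma>\<close>, \<open>\<phi>\<close>, \<open>\<psi>\<close>: integrate the pointwise bound of step (2)
  over the box of step (3), centred at the matrix of step (1).\<close>
lemma GOE_resolvent_moment_lower_bound: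
  fixes \<sigma> :: "complex^'n::{finite,linorder}^'n::{finite,linorder}" and \<phi> \<psi> :: "complex^'n::{finite,linorder}"
  assumes "0 < s"
  shows "ennreal (moment_constant CARD('n) (card (GOE_index :: ('n \<times> 'n) set)) s (opnorm \<sigma>)
       * norm \<phi> powr s * norm \<psi> powr s)
    \<le> (\<integral>\<^sup>+ V. ennreal (cmod (cinner (matrix_inv (cmat_of_real V - \<sigma>) *v \<phi>) \<psi>) powr s) \<partial>GOE)"
proof -
  define r where "r = opnorm \<sigma>"
  define t where "t = resolvent_scale CARD('n) r"
  define q where "q = (norm \<phi> * norm \<psi> / (6 * real CARD('n) * t)) powr s"
  obtain \<pi> \<epsilon> where signed: "signed_involution \<pi> \<epsilon>"
    and aligned: "norm \<phi> * norm \<psi> / (3 * real CARD('n))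
      \<le> cmod (cinner (cmat_of_real (signed_perm_matrix \<pi> \<epsilon>) *v \<phi>) \<psi>)"
    using exists_aligned_signed_involution by blast
  define B where "B = entry_box (t *\<^sub>R signed_perm_matrix \<pi> \<epsilon>)"
  have \<sigma>_bound: "norm (\<sigma> *v x) \<le> r * norm x" for x
    unfolding r_def opnorm_def by (rule onorm) simp
  have "0 \<le> r" unfolding r_def opnorm_def by (rule onorm_pos_le) simp
  have box: "ennreal ((2 * gauss_floor t) ^ card (GOE_index :: ('n \<times> 'n) set)) \<le> emeasure GOE B"
    unfolding B_def using resolvent_scale_large(3)[of "CARD('n)" r]
      signed_perm_matrix_symmetric[OF signed] signed_perm_matrix_entry_bound[OF signed]
    by (intro GOE_entry_box_ge) (simp_all add: t_def abs_mult)
  have "ennreal q \<le> ennreal (cmod (cinner (matrix_inv (cmat_of_real V - \<sigma>) *v \<phi>) \<psi>) powr s)"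
    if "V \<in> B" for V
    using resolvent_lower_bound_on_box[OF signed aligned \<sigma>_bound \<open>0 \<le> r\<close>] that \<open>0 < s\<close>
      resolvent_scale_large(3)[of "CARD('n)" r]
    unfolding q_def B_def t_def by (intro ennreal_leI powr_mono2) simp_all
  then have on_box: "ennreal q * emeasure GOE B
      \<le> (\<integral>\<^sup>+ V. ennreal (cmod (cinner (matrix_inv (cmat_of_real V - \<sigma>) *v \<phi>) \<psi>) powr s) \<partial>GOE)"
    using entry_box_sets by (intro nn_integral_ge_on_set) (simp_all add: B_def GOE_as_distr)
  have "0 < t" unfolding t_def by (rule resolvent_scale_large(3))
  then have "q = (1 / (6 * real CARD('n) * t)) powr s * norm \<phi> powr s * norm \<psi> powr s"
    unfolding q_def by (simp add: powr_mult powr_divide)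
  then have "moment_constant CARD('n) (card (GOE_index :: ('n \<times> 'n) set)) s r
      * norm \<phi> powr s * norm \<psi> powr s = q * (2 * gauss_floor t) ^ card (GOE_index :: ('n \<times> 'n) set)"
    unfolding moment_constant_def t_def by simp
  also have "ennreal \<dots> = ennreal q * ennreal ((2 * gauss_floor t) ^ card (GOE_index :: ('n \<times> 'n) set))"
    using gauss_floor_pos[of t] by (simp add: ennreal_mult' q_def)
  also have "\<dots> \<le> ennreal q * emeasure GOE B"
    by (rule mult_left_mono[OF box]) simp
  finally show ?thesis using on_box unfolding r_def by (rule order_trans)
qed

theorem mainTheorem10:
  fixes s :: real
  assumes "0 < s" and "s < 1"
  shows "\<exists>C :: real \<Rightarrow> real. (\<forall>r. C r > 0) \<and>
    (\<forall>(\<sigma> :: complex^('n::{finite,linorder})^('n::{finite,linorder})) (\<phi> :: complex^('n::{finite,linorder})) (\<psi> :: complex^('n::{finite,linorder})).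
      (\<integral>\<^sup>+ V. ennreal (cmod (cinner (matrix_inv (cmat_of_real V - \<sigma>) *v \<phi>) \<psi>) powr s) \<partial>GOE)
        \<ge> ennreal (C (opnorm \<sigma>) * norm \<phi> powr s * norm \<psi> powr s))"
proof (intro exI conjI allI)
  let ?C = "moment_constant CARD('n) (card (GOE_index :: ('n \<times> 'n) set)) s"
  show "?C r > 0" for r by (rule moment_constant_pos) simp
  show "ennreal (?C (opnorm \<sigma>) * norm \<phi> powr s * norm \<psi> powr s)
      \<le> (\<integral>\<^sup>+ V. ennreal (cmod (cinner (matrix_inv (cmat_of_real V - \<sigma>) *v \<phi>) \<psi>) powr s) \<partial>GOE)"
    for \<sigma> :: "complex^'n::{finite,linorder}^'n::{finite,linorder}"
      and \<phi> \<psi> :: "complex^'n::{finite,linorder}"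
    by (rule GOE_resolvent_moment_lower_bound[OF assms(1)])
qed

end
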